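(* Consider either spinless fermions or spinless bosons on the ring $[1:L]$, and let $H=\sum_{m=m_0}^{m_1}H^{(m)}=\bigoplus_{n\ge0}H_n$ be a Hamiltonian of the form described in the context. Let $n\geq m_1$ be such that $H_n\geq 0$ and $$H_{n+1}\geq \frac{1}{n+1-m_0}\sum_{j=1}^L a_j^\dagger H_n a_j .$$ Then $$\operatorname{gap}H_{n+1}\geq \frac{n+1-\Big\|P_{n+1}^\perp\sum_{j=1}^L a_j^\dagger P_n a_j P_{n+1}^\perp\Big\|}{n+1-m_0}\,\operatorname{gap}H_n .$$
   Context: Let $a_j^\dagger,a_j$ ($j\in[1:L]$) be the canonical creation and annihilation operators of spinless fermions (CAR) or bosons (CCR) on the Fock space over $\mathbb{C}^L$, and $N=\sum_{j}a_j^\dagger a_j$. The Hamiltonian is $H=\sum_{m=m_0}^{m_1}H^{(m)}$ with integers $m_0\le m_1$ and $$H^{(m)}=\sum_{1\le j_1,\dots,j_m\le L}\ \sum_{1\le k_1,\dots,k_m\le L} W^{k_1\dots k_m}_{j_1\dots j_m}\,a^\dagger_{j_1}\cdots a^\dagger_{j_m}a_{k_m}\cdots a_{k_1},$$ with coefficients $W\in\mathbb{C}$ such that each $H^{(m)}$ is self-adjoint; $H_n$ denotes the restriction of $H$ to the $n$-particle subspace. For each $n$, $P_n$ is the orthogonal projection (in the $n$-particle space) onto $\ker H_n$, $P_n^\perp=\mathbb{1}-P_n$, and $\operatorname{gap}H_n=\min\{\langle\psi,H_n\psi\rangle:\ \psi\perp\ker H_n,\ \|\psi\|=1\}$. The operator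 $\sum_j a_j^\dagger P_n a_j$ acts on the $(n+1)$-particle space, and $\|\cdot\|$ is the operator norm. *)

theory Defs
  imports "HOL-Analysis.Analysis"
begin

datatype stat = Fermi | Bose

text \<open>Occupation-number configurations on the sites [1:L]: c i = occupation of site i.
  Fock-space vectors are coefficient functions on configurations.\<close>
type_synonym cfg = "nat \<Rightarrow> nat"
type_synonym state = "cfg \<Rightarrow> complex"

definition vcfg :: "stat \<Rightarrow> nat \<Rightarrow> cfg \<Rightarrow> bool" where
  "vcfg st L c \<longleftrightarrow> (\<forall>i. c i \<noteq> 0 \<longrightarrow> i \<in> {1..L}) \<and> (st = Fermi \<longrightarrow> (\<forall>i. c i \<le> 1))"

definition cfgs :: "stat \<Rightarrow> nat \<Rightarrow> nat \<Rightarrow> cfg set" where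
  "cfgs st L n = {c. vcfg st L c \<and> (\<Sum>i\<in>{1..L}. c i) = n}"

definition insec :: "stat \<Rightarrow> nat \<Rightarrow> nat \<Rightarrow> state \<Rightarrow> bool" where
  "insec st L n \<psi> \<longleftrightarrow> (\<forall>c. \<psi> c \<noteq> 0 \<longrightarrow> c \<in> cfgs st L n)"

text \<open>Jordan--Wigner sign for fermions (ordering of sites), 1 for bosons\<close>
definition fsign :: "stat \<Rightarrow> nat \<Rightarrow> cfg \<Rightarrow> nat \<Rightarrow> complex" where
  "fsign st L c j = (if st = Fermi then (-1) ^ card {k\<in>{1..L}. k < j \<and> c k \<noteq> 0} else 1)"

definition adag :: "stat \<Rightarrow> nat \<Rightarrow> nat \<Rightarrow> state \<Rightarrow> state" where
  "adag st L j \<psi> = (\<lambda>c. if vcfg st L c \<and> 1 \<le> c j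
      then fsign st L c j * complex_of_real (sqrt (real (c j))) * \<psi> (c(j := c j - 1))
      else 0)"

definition ann :: "stat \<Rightarrow> nat \<Rightarrow> nat \<Rightarrow> state \<Rightarrow> state" where
  "ann st L j \<psi> = (\<lambda>c. if vcfg st L c \<and> vcfg st L (c(j := Suc (c j)))
      then fsign st L c j * complex_of_real (sqrt (real (Suc (c j)))) * \<psi> (c(j := Suc (c j)))
      else 0)"

definition idx_lists :: "nat \<Rightarrow> nat \<Rightarrow> nat list set" where
  "idx_lists L m = {js. set js \<subseteq> {1..L} \<and> length js = m}"

text \<open>H^(m) = sum W^{k_1..k_m}_{j_1..j_m} a^dag_{j_1}..a^dag_{j_m} a_{k_m}..a_{k_1};
  W m js ks is the coefficient with js = [j_1..j_m], ks = [k_1..k_m].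
  fold applies a_{k_1} first; foldr applies a^dag_{j_m} first.\<close>
definition Hm :: "stat \<Rightarrow> nat \<Rightarrow> (nat \<Rightarrow> nat list \<Rightarrow> nat list \<Rightarrow> complex) \<Rightarrow> nat \<Rightarrow> state \<Rightarrow> state" where
  "Hm st L W m \<psi> = (\<lambda>c. \<Sum>js\<in>idx_lists L m. \<Sum>ks\<in>idx_lists L m.
      W m js ks * foldr (adag st L) js (fold (ann st L) ks \<psi>) c)"

definition Ham :: "stat \<Rightarrow> nat \<Rightarrow> (nat \<Rightarrow> nat list \<Rightarrow> nat list \<Rightarrow> complex) \<Rightarrow> nat \<Rightarrow> nat \<Rightarrow> state \<Rightarrow> state" where
  "Ham st L W m0 m1 \<psi> = (\<lambda>c. \<Sum>m\<in>{m0..m1}. Hm st L W m \<psi> c)"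

definition inner_n :: "stat \<Rightarrow> nat \<Rightarrow> nat \<Rightarrow> state \<Rightarrow> state \<Rightarrow> complex" where
  "inner_n st L n \<phi> \<psi> = (\<Sum>c\<in>cfgs st L n. cnj (\<phi> c) * \<psi> c)"

definition norm_n :: "stat \<Rightarrow> nat \<Rightarrow> nat \<Rightarrow> state \<Rightarrow> real" where
  "norm_n st L n \<psi> = sqrt (\<Sum>c\<in>cfgs st L n. (cmod (\<psi> c))\<^sup>2)"

definition kerH :: "stat \<Rightarrow> nat \<Rightarrow> (nat \<Rightarrow> nat list \<Rightarrow> nat list \<Rightarrow> complex) \<Rightarrow> nat \<Rightarrow> nat \<Rightarrow> nat \<Rightarrow> state set" where
  "kerH st L W m0 m1 n = {\<psi>. insec st L n \<psi> \<and> (\<forall>c\<in>cfgs st L n. Ham st L W m0 m1 \<psi> c = 0)}"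

definition Pn :: "stat \<Rightarrow> nat \<Rightarrow> (nat \<Rightarrow> nat list \<Rightarrow> nat list \<Rightarrow> complex) \<Rightarrow> nat \<Rightarrow> nat \<Rightarrow> nat \<Rightarrow> state \<Rightarrow> state" where
  "Pn st L W m0 m1 n \<psi> = (THE \<phi>. \<phi> \<in> kerH st L W m0 m1 n \<and>
      (\<forall>\<eta>\<in>kerH st L W m0 m1 n. inner_n st L n \<eta> (\<lambda>c. \<psi> c - \<phi> c) = 0))"

definition Pn_perp :: "stat \<Rightarrow> nat \<Rightarrow> (nat \<Rightarrow> nat list \<Rightarrow> nat list \<Rightarrow> complex) \<Rightarrow> nat \<Rightarrow> nat \<Rightarrow> nat \<Rightarrow> state \<Rightarrow> state" where
  "Pn_perp st L W m0 m1 n \<psi> = (\<lambda>c. \<psi> c - Pn st L W m0 m1 n \<psi> c)"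

text \<open>gap H_n = min { <psi, H_n psi> : psi \<bottom> ker H_n, |psi| = 1 } (attained; written as Inf)\<close>
definition gapH :: "stat \<Rightarrow> nat \<Rightarrow> (nat \<Rightarrow> nat list \<Rightarrow> nat list \<Rightarrow> complex) \<Rightarrow> nat \<Rightarrow> nat \<Rightarrow> nat \<Rightarrow> real" where
  "gapH st L W m0 m1 n = Inf {Re (inner_n st L n \<psi> (Ham st L W m0 m1 \<psi>)) | \<psi>.
      insec st L n \<psi> \<and> (\<forall>\<eta>\<in>kerH st L W m0 m1 n. inner_n st L n \<eta> \<psi> = 0) \<and> norm_n st L n \<psi> = 1}"

definition opnorm_n :: "stat \<Rightarrow> nat \<Rightarrow> nat \<Rightarrow> (state \<Rightarrow> state) \<Rightarrow> real" where
  "opnorm_n st L n T = Sup {norm_n st L n (T \<psi>) | \<psi>. insec st L n \<psi> \<and> norm_n st L n \<psi> \<le> 1}"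

end

theory Submission
  imports Defs
begin

text \<open>
  Let psi be a unit vector in the (n+1)-particle space orthogonal to ker H_(n+1). By
  hypothesis <psi, H psi> is at least 1/(n+1-m0) times sum_j <a_j psi, H_n a_j psi>, and
  since H_n >= 0 each term is at least gap H_n * |P_n^perp a_j psi|^2. The number operator
  identity sum_j |a_j psi|^2 = n+1 turns the sum of these squares into
  n+1 - <psi, sum_j a_j^dagger P_n a_j psi>, and because P_(n+1)^perp psi = psi this inner
  product is bounded by the operator norm of P_(n+1)^perp (sum_j a_j^dagger P_n a_j) P_(n+1)^perp.
  Taking the infimum over psi gives the bound on gap H_(n+1).
\<close>

section \<open>Configurations and ladder operators\<close>

lemma finite_cfgs: "finite (cfgs st L k)"
proof -
  have "cfgs st L k \<subseteq> {f. \<forall>x. (x \<in> {1..L} \<longrightarrow> f x \<in> {0..k}) \<and> (x \<notin> {1..L} \<longrightarrow> f x = 0)}"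
    (is "_ \<subseteq> ?F")
  proof
    fix c assume "c \<in> cfgs st L k"
    then have v: "vcfg st L c" and s: "(\<Sum>i\<in>{1..L}. c i) = k" by (auto simp: cfgs_def)
    have "c x \<le> k" if "x \<in> {1..L}" for x
      using s member_le_sum[of x "{1..L}" c] that by auto
    moreover have "c x = 0" if "x \<notin> {1..L}" for x
      using v that unfolding vcfg_def by auto
    ultimately show "c \<in> ?F" by auto
  qed
  then show ?thesis using finite_set_of_finite_funs[of "{1..L}" "{0..k}" 0] finite_subset by blast
qed

lemma fsign_fun_upd_self: "fsign st L (c(j := v)) j = fsign st L c j"
proof -
  have "{k\<in>{1..L}. k < j \<and> (c(j := v)) k \<noteq> 0} = {k\<in>{1..L}. k < j \<and> c k \<noteq> 0}" by auto
  then show ?thesis unfolding fsign_def by simp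
qed

lemma cnj_fsign: "cnj (fsign st L c j) = fsign st L c j"
  unfolding fsign_def by simp

lemma fsign_mult_self: "fsign st L c j * fsign st L c j = 1"
  unfolding fsign_def by (simp add: power_mult_distrib[symmetric])

lemma vcfg_fun_upd_decr: "vcfg st L c \<Longrightarrow> vcfg st L (c(j := c j - 1))"
  unfolding vcfg_def by auto

lemma vcfg_occupied_site: "vcfg st L c \<Longrightarrow> 1 \<le> c j \<Longrightarrow> j \<in> {1..L}"
  unfolding vcfg_def by (metis not_one_le_zero)

lemma sum_fun_upd_add:
  assumes "finite A" "j \<in> A"
  shows "(\<Sum>i\<in>A. (c(j := v)) i) + c j = (\<Sum>i\<in>A. c i) + (v::nat)"
proof -
  have "(\<Sum>i\<in>A. (c(j := v)) i) = v + (\<Sum>i\<in>A-{j}. c i)"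
    using assms by (simp add: sum.remove)
  moreover have "(\<Sum>i\<in>A. c i) = c j + (\<Sum>i\<in>A-{j}. c i)"
    using assms by (simp add: sum.remove)
  ultimately show ?thesis by simp
qed

lemma cfgs_add_particle:
  assumes "d \<in> cfgs st L k" "vcfg st L (d(j := Suc (d j)))"
  shows "d(j := Suc (d j)) \<in> cfgs st L (Suc k)"
proof -
  have s: "(\<Sum>i\<in>{1..L}. d i) = k" using assms(1) unfolding cfgs_def by simp
  have "j \<in> {1..L}" by (rule vcfg_occupied_site[OF assms(2)]) simp
  then have "(\<Sum>i\<in>{1..L}. (d(j := Suc (d j))) i) = Suc k"
    using s sum_fun_upd_add[of "{1..L}" j d "Suc (d j)"] by simp
  then show ?thesis unfolding cfgs_def using assms(2) by simp
qed

lemma cfgs_remove_particle: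
  assumes "c \<in> cfgs st L (Suc k)" "1 \<le> c j"
  shows "c(j := c j - 1) \<in> cfgs st L k"
proof -
  have v: "vcfg st L c" using assms(1) by (simp add: cfgs_def)
  then have "j \<in> {1..L}" using assms(2) by (rule vcfg_occupied_site)
  then have "(\<Sum>i\<in>{1..L}. (c(j := c j - 1)) i) = k"
    using assms sum_fun_upd_add[of "{1..L}" j c "c j - 1"] by (simp add: cfgs_def)
  then show ?thesis unfolding cfgs_def using vcfg_fun_upd_decr[OF v] by simp
qed

lemma insec_ann:
  assumes "insec st L (Suc k) \<psi>"
  shows "insec st L k (ann st L j \<psi>)"
  unfolding insec_def
proof (intro allI impI)
  fix c assume "ann st L j \<psi> c \<noteq> 0"
  then have "c(j := Suc (c j)) \<in> cfgs st L (Suc k)"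
    using assms by (auto simp: ann_def insec_def split: if_splits)
  then have "(c(j := Suc (c j)))(j := (c(j := Suc (c j))) j - 1) \<in> cfgs st L k"
    by (rule cfgs_remove_particle) simp
  then show "c \<in> cfgs st L k" by simp
qed

lemma inner_n_adag:
  "inner_n st L (Suc k) x (adag st L j y) = inner_n st L k (ann st L j x) y"
proof -
  let ?occ = "{c \<in> cfgs st L (Suc k). 1 \<le> c j}"
  let ?vac = "{d \<in> cfgs st L k. vcfg st L (d(j := Suc (d j)))}"
  let ?amp = "\<lambda>c. fsign st L c j * complex_of_real (sqrt (real (c j)))"
  have "inner_n st L (Suc k) x (adag st L j y) = (\<Sum>c\<in>?occ. cnj (x c) * (?amp c * y (c(j := c j - 1))))"
    unfolding inner_n_def
    by (rule sum.mono_neutral_cong_right[OF finite_cfgs]) (auto simp: adag_def cfgs_def)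
  also have "\<dots> = (\<Sum>d\<in>?vac. cnj (?amp (d(j := Suc (d j))) * x (d(j := Suc (d j)))) * y d)"
  proof (rule sum.reindex_bij_witness[where i = "\<lambda>d. d(j := Suc (d j))" and j = "\<lambda>c. c(j := c j - 1)"])
    fix c assume c: "c \<in> ?occ"
    then have restore: "(c(j := c j - 1))(j := Suc ((c(j := c j - 1)) j)) = c" by auto
    then show "(c(j := c j - 1))(j := Suc ((c(j := c j - 1)) j)) = c" .
    show "c(j := c j - 1) \<in> ?vac"
      using c cfgs_remove_particle[of c st L k j] restore by (simp add: cfgs_def)
    show "cnj (?amp ((c(j := c j - 1))(j := Suc ((c(j := c j - 1)) j)))
            * x ((c(j := c j - 1))(j := Suc ((c(j := c j - 1)) j)))) * y (c(j := c j - 1))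
          = cnj (x c) * (?amp c * y (c(j := c j - 1)))"
      unfolding restore by (simp add: cnj_fsign)
  next
    fix d assume d: "d \<in> ?vac"
    then show "(d(j := Suc (d j)))(j := (d(j := Suc (d j))) j - 1) = d" by simp
    show "d(j := Suc (d j)) \<in> ?occ" using d cfgs_add_particle[of d st L k j] by simp
  qed
  also have "\<dots> = inner_n st L k (ann st L j x) y"
    unfolding inner_n_def
    by (rule sum.mono_neutral_cong_left[OF finite_cfgs]) (auto simp: ann_def cfgs_def fsign_fun_upd_self)
  finally show ?thesis .
qed

section \<open>Linear maps on states\<close>

definition linear_op :: "(state \<Rightarrow> state) \<Rightarrow> bool" where
  "linear_op T \<longleftrightarrow> (\<forall>x y. T (\<lambda>c. x c + y c) = (\<lambda>c. T x c + T y c)) \<and>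
                    (\<forall>a x. T (\<lambda>c. a * x c) = (\<lambda>c. a * T x c))"

lemma linear_opD:
  "linear_op T \<Longrightarrow> T (\<lambda>c. x c + y c) = (\<lambda>c. T x c + T y c)"
  "linear_op T \<Longrightarrow> T (\<lambda>c. a * x c) = (\<lambda>c. a * T x c)"
  unfolding linear_op_def by blast+

lemma linear_op_zero: "linear_op T \<Longrightarrow> T (\<lambda>c. 0) = (\<lambda>c. 0)"
  using linear_opD(2)[of T 0 "\<lambda>c. 0"] by simp

lemma linear_op_id: "linear_op id"
  unfolding linear_op_def by simp

lemma linear_op_comp: "linear_op T \<Longrightarrow> linear_op S \<Longrightarrow> linear_op (T \<circ> S)"
  unfolding linear_op_def by simp

lemma linear_op_fold: "(\<And>j. linear_op (f j)) \<Longrightarrow> linear_op (fold f ks)"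
  by (induction ks) (simp_all add: linear_op_id linear_op_comp)

lemma linear_op_foldr: "(\<And>j. linear_op (f j)) \<Longrightarrow> linear_op (foldr f ks)"
  by (induction ks) (simp_all add: linear_op_id linear_op_comp)

lemma linear_op_sum:
  assumes "\<And>i. i \<in> I \<Longrightarrow> linear_op (T i)"
  shows "linear_op (\<lambda>\<psi> c. \<Sum>i\<in>I. T i \<psi> c)"
  unfolding linear_op_def
  using linear_opD[OF assms] by (simp add: sum.distrib sum_distrib_left)

lemma linear_op_scale: "linear_op T \<Longrightarrow> linear_op (\<lambda>\<psi> c. a * T \<psi> c)"
  unfolding linear_op_def by (simp add: algebra_simps)

lemma linear_op_sum_apply:
  assumes "finite B" "linear_op T"
  shows "T (\<lambda>c. \<Sum>b\<in>B. f b * g b c) = (\<lambda>c. \<Sum>b\<in>B. f b * T (g b) c)"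
  using assms(1)
proof (induction B rule: finite_induct)
  case empty
  then show ?case using linear_op_zero[OF assms(2)] by simp
next
  case (insert b B)
  then have "T (\<lambda>c. \<Sum>b\<in>insert b B. f b * g b c) = T (\<lambda>c. f b * g b c + (\<Sum>b\<in>B. f b * g b c))"
    by simp
  also have "\<dots> = (\<lambda>c. f b * T (g b) c + (\<Sum>b\<in>B. f b * T (g b) c))"
    unfolding linear_opD(1)[OF assms(2)] insert.IH linear_opD(2)[OF assms(2)] ..
  finally show ?case using insert by simp
qed

lemma linear_op_ann: "linear_op (ann st L j)"
  unfolding linear_op_def ann_def by (auto simp: fun_eq_iff algebra_simps)

lemma linear_op_adag: "linear_op (adag st L j)"
  unfolding linear_op_def adag_def by (auto simp: fun_eq_iff algebra_simps)

lemma linear_op_Hm: "linear_op (Hm st L W m)"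
proof -
  have "linear_op (foldr (adag st L) js \<circ> fold (ann st L) ks)" for js ks
    by (intro linear_op_comp linear_op_foldr linear_op_fold linear_op_adag linear_op_ann)
  then have "linear_op (\<lambda>\<psi> c. \<Sum>js\<in>idx_lists L m. \<Sum>ks\<in>idx_lists L m.
      W m js ks * (foldr (adag st L) js \<circ> fold (ann st L) ks) \<psi> c)"
    by (intro linear_op_sum linear_op_scale)
  then show ?thesis unfolding Hm_def comp_def .
qed

lemma linear_op_Ham: "linear_op (Ham st L W m0 m1)"
  unfolding Ham_def[abs_def] by (intro linear_op_sum linear_op_Hm)

section \<open>The n-particle Hilbert space\<close>

lemma insec_iff: "insec st L k x \<longleftrightarrow> (\<forall>c. c \<notin> cfgs st L k \<longrightarrow> x c = 0)"
  unfolding insec_def by blast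

lemma insec_add: "insec st L k x \<Longrightarrow> insec st L k y \<Longrightarrow> insec st L k (\<lambda>c. x c + y c)"
  by (simp add: insec_iff)

lemma insec_diff: "insec st L k x \<Longrightarrow> insec st L k y \<Longrightarrow> insec st L k (\<lambda>c. x c - y c)"
  by (simp add: insec_iff)

lemma insec_scale: "insec st L k x \<Longrightarrow> insec st L k (\<lambda>c. a * x c)"
  by (simp add: insec_iff)

lemma insec_zero: "insec st L k (\<lambda>c. 0)"
  by (simp add: insec_iff)

lemma inner_n_add_left: "inner_n st L k (\<lambda>c. x c + y c) z = inner_n st L k x z + inner_n st L k y z"
  unfolding inner_n_def by (simp add: algebra_simps sum.distrib)

lemma inner_n_add_right: "inner_n st L k x (\<lambda>c. y c + z c) = inner_n st L k x y + inner_n st L k x z"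
  unfolding inner_n_def by (simp add: algebra_simps sum.distrib)

lemma inner_n_diff_left: "inner_n st L k (\<lambda>c. x c - y c) z = inner_n st L k x z - inner_n st L k y z"
  unfolding inner_n_def by (simp add: algebra_simps sum_subtractf)

lemma inner_n_diff_right: "inner_n st L k x (\<lambda>c. y c - z c) = inner_n st L k x y - inner_n st L k x z"
  unfolding inner_n_def by (simp add: algebra_simps sum_subtractf)

lemma inner_n_scale_left: "inner_n st L k (\<lambda>c. a * x c) y = cnj a * inner_n st L k x y"
  unfolding inner_n_def by (simp add: algebra_simps sum_distrib_left)

lemma inner_n_scale_right: "inner_n st L k x (\<lambda>c. a * y c) = a * inner_n st L k x y"
  unfolding inner_n_def by (simp add: algebra_simps sum_distrib_left)

lemma inner_n_sum_left: "inner_n st L k (\<lambda>c. \<Sum>j\<in>J. f j c) x = (\<Sum>j\<in>J. inner_n st L k (f j) x)"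
  unfolding inner_n_def by (simp add: sum_distrib_right sum.swap[of _ J])

lemma inner_n_sum_right: "inner_n st L k x (\<lambda>c. \<Sum>j\<in>J. f j c) = (\<Sum>j\<in>J. inner_n st L k x (f j))"
  unfolding inner_n_def by (simp add: sum_distrib_left sum.swap[of _ J])

lemma inner_n_commute: "inner_n st L k y x = cnj (inner_n st L k x y)"
  unfolding inner_n_def by (simp add: mult.commute)

lemma inner_n_zero_left: "inner_n st L k (\<lambda>c. 0) x = 0"
  unfolding inner_n_def by simp

lemma norm_n_sq: "(norm_n st L k x)\<^sup>2 = (\<Sum>c\<in>cfgs st L k. (cmod (x c))\<^sup>2)"
  unfolding norm_n_def by (intro real_sqrt_pow2 sum_nonneg) simp

lemma norm_n_nonneg: "0 \<le> norm_n st L k x"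
  unfolding norm_n_def by (simp add: sum_nonneg)

lemma inner_n_self: "inner_n st L k x x = complex_of_real ((norm_n st L k x)\<^sup>2)"
proof -
  have "inner_n st L k x x = (\<Sum>c\<in>cfgs st L k. complex_of_real ((cmod (x c))\<^sup>2))"
    unfolding inner_n_def by (intro sum.cong refl) (simp only: complex_norm_square mult.commute)
  then show ?thesis by (simp add: norm_n_sq)
qed

lemma cmod_le_norm_n:
  assumes "c \<in> cfgs st L k"
  shows "cmod (x c) \<le> norm_n st L k x"
proof -
  have "(cmod (x c))\<^sup>2 \<le> (norm_n st L k x)\<^sup>2"
    unfolding norm_n_sq by (rule member_le_sum[OF assms]) (simp_all add: finite_cfgs)
  then show ?thesis using norm_n_nonneg by (rule power2_le_imp_le)
qed

lemma insec_norm_n_eq_0: "insec st L k x \<Longrightarrow> norm_n st L k x = 0 \<Longrightarrow> x = (\<lambda>c. 0)"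
  using cmod_le_norm_n[of _ st L k x] unfolding insec_def by (fastforce simp: fun_eq_iff)

lemma norm_n_scale: "norm_n st L k (\<lambda>c. a * x c) = cmod a * norm_n st L k x"
  unfolding norm_n_def
  by (simp add: norm_mult power_mult_distrib sum_distrib_left[symmetric] real_sqrt_mult)

lemma re_inner_n_le: "Re (inner_n st L k x y) \<le> norm_n st L k x * norm_n st L k y"
proof -
  have "Re (inner_n st L k x y) \<le> (\<Sum>c\<in>cfgs st L k. cmod (cnj (x c) * y c))"
    unfolding inner_n_def using complex_Re_le_cmod norm_sum order_trans by blast
  also have "\<dots> = (\<Sum>c\<in>cfgs st L k. \<bar>cmod (x c)\<bar> * \<bar>cmod (y c)\<bar>)"
    by (simp add: norm_mult)
  also have "\<dots> \<le> L2_set (\<lambda>c. cmod (x c)) (cfgs st L k) * L2_set (\<lambda>c. cmod (y c)) (cfgs st L k)"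
    by (rule L2_set_mult_ineq)
  finally show ?thesis unfolding L2_set_def norm_n_def .
qed

lemma norm_n_diff_sq_orth:
  assumes "inner_n st L k p (\<lambda>c. x c - p c) = 0"
  shows "(norm_n st L k (\<lambda>c. x c - p c))\<^sup>2 = (norm_n st L k x)\<^sup>2 - Re (inner_n st L k x p)"
proof -
  have "inner_n st L k (\<lambda>c. x c - p c) (\<lambda>c. x c - p c) = inner_n st L k x x - inner_n st L k x p"
    using assms by (simp only: inner_n_diff_left inner_n_diff_right) simp
  from arg_cong[OF this, of Re] show ?thesis by (simp add: inner_n_self)
qed

lemma insec_expand:
  assumes "insec st L k \<psi>"
  shows "\<psi> = (\<lambda>c. \<Sum>b\<in>cfgs st L k. \<psi> b * (if c = b then 1 else 0))"
proof
  fix c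
  show "\<psi> c = (\<Sum>b\<in>cfgs st L k. \<psi> b * (if c = b then 1 else 0))"
    using assms finite_cfgs[of st L k] unfolding insec_def
    by (cases "c \<in> cfgs st L k") (auto simp: if_distrib cong: if_cong)
qed

lemma linear_op_bdd_above:
  assumes "linear_op T"
  shows "bdd_above {norm_n st L k (T \<psi>) | \<psi>. insec st L k \<psi> \<and> norm_n st L k \<psi> \<le> 1}"
proof -
  let ?B = "cfgs st L k"
  define G where "G = (\<lambda>c. \<Sum>b\<in>?B. cmod (T (\<lambda>c. if c = b then 1 else 0) c))"
  have "norm_n st L k (T \<psi>) \<le> sqrt (\<Sum>c\<in>?B. (G c)\<^sup>2)"
    if \<psi>: "insec st L k \<psi>" "norm_n st L k \<psi> \<le> 1" for \<psi>
  proof -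
    have T\<psi>: "T \<psi> = (\<lambda>c. \<Sum>b\<in>?B. \<psi> b * T (\<lambda>c. if c = b then 1 else 0) c)"
      by (subst insec_expand[OF \<psi>(1)]) (rule linear_op_sum_apply[OF finite_cfgs assms])
    have "cmod (T \<psi> c) \<le> G c" for c
    proof -
      have "cmod (T \<psi> c) \<le> (\<Sum>b\<in>?B. cmod (\<psi> b * T (\<lambda>c. if c = b then 1 else 0) c))"
        unfolding T\<psi> by (rule norm_sum)
      also have "\<dots> = (\<Sum>b\<in>?B. cmod (\<psi> b) * cmod (T (\<lambda>c. if c = b then 1 else 0) c))"
        by (simp add: norm_mult)
      also have "\<dots> \<le> G c" unfolding G_def
        using cmod_le_norm_n[of _ st L k \<psi>] \<psi>(2)
        by (intro sum_mono mult_left_le_one_le) (auto intro: order_trans)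
      finally show ?thesis .
    qed
    then have "(\<Sum>c\<in>?B. (cmod (T \<psi> c))\<^sup>2) \<le> (\<Sum>c\<in>?B. (G c)\<^sup>2)" by (intro sum_mono power_mono) auto
    then show ?thesis unfolding norm_n_def by simp
  qed
  then show ?thesis by (intro bdd_aboveI[where M = "sqrt (\<Sum>c\<in>?B. (G c)\<^sup>2)"]) auto
qed

lemma re_inner_n_le_opnorm_n:
  assumes "linear_op T" "insec st L k \<psi>" "norm_n st L k \<psi> = 1"
  shows "Re (inner_n st L k \<psi> (T \<psi>)) \<le> opnorm_n st L k T"
proof -
  have "Re (inner_n st L k \<psi> (T \<psi>)) \<le> norm_n st L k (T \<psi>)"
    using re_inner_n_le[of st L k \<psi> "T \<psi>"] assms(3) by simp
  also have "\<dots> \<le> opnorm_n st L k T"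
    unfolding opnorm_n_def using assms by (intro cSup_upper linear_op_bdd_above) auto
  finally show ?thesis .
qed

lemma adag_ann_same_site:
  assumes "c \<in> cfgs st L (Suc k)"
  shows "adag st L j (ann st L j \<psi>) c = of_nat (c j) * \<psi> c"
proof (cases "1 \<le> c j")
  case True
  have v: "vcfg st L c" using assms by (simp add: cfgs_def)
  have restore: "(c(j := c j - 1))(j := Suc ((c(j := c j - 1)) j)) = c" using True by auto
  have "ann st L j \<psi> (c(j := c j - 1)) = fsign st L c j * complex_of_real (sqrt (real (c j))) * \<psi> c"
    unfolding ann_def using restore v vcfg_fun_upd_decr[OF v] True by (simp add: fsign_fun_upd_self)
  then have "adag st L j (ann st L j \<psi>) c
      = (fsign st L c j * fsign st L c j) * (complex_of_real (sqrt (real (c j))) * complex_of_real (sqrt (real (c j)))) * \<psi> c"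
    unfolding adag_def using v True by (simp add: algebra_simps)
  also have "\<dots> = of_nat (c j) * \<psi> c"
    unfolding fsign_mult_self of_real_mult[symmetric] by simp
  finally show ?thesis .
qed (simp add: adag_def)

lemma sum_inner_n_ann_self:
  assumes "insec st L (Suc k) \<psi>"
  shows "(\<Sum>j\<in>{1..L}. inner_n st L k (ann st L j \<psi>) (ann st L j \<psi>))
       = of_nat (Suc k) * inner_n st L (Suc k) \<psi> \<psi>"
proof -
  have "(\<Sum>j\<in>{1..L}. inner_n st L k (ann st L j \<psi>) (ann st L j \<psi>))
      = (\<Sum>j\<in>{1..L}. inner_n st L (Suc k) \<psi> (adag st L j (ann st L j \<psi>)))"
    by (simp add: inner_n_adag)
  also have "\<dots> = (\<Sum>j\<in>{1..L}. \<Sum>c\<in>cfgs st L (Suc k). cnj (\<psi> c) * (of_nat (c j) * \<psi> c))"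
    unfolding inner_n_def by (simp add: adag_ann_same_site)
  also have "\<dots> = (\<Sum>c\<in>cfgs st L (Suc k). cnj (\<psi> c) * \<psi> c * of_nat (\<Sum>j\<in>{1..L}. c j))"
    by (subst sum.swap) (simp add: sum_distrib_left algebra_simps)
  also have "\<dots> = (\<Sum>c\<in>cfgs st L (Suc k). cnj (\<psi> c) * \<psi> c * of_nat (Suc k))"
    by (intro sum.cong refl) (simp add: cfgs_def)
  finally show ?thesis unfolding inner_n_def by (simp add: sum_distrib_left algebra_simps)
qed

section \<open>Orthogonal projections\<close>

definition state_subspace :: "state set \<Rightarrow> bool" where
  "state_subspace K \<longleftrightarrow> (\<lambda>c. 0) \<in> K \<and> (\<forall>x\<in>K. \<forall>y\<in>K. (\<lambda>c. x c + y c) \<in> K) \<and>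
                        (\<forall>a. \<forall>x\<in>K. (\<lambda>c. a * x c) \<in> K)"

definition is_orth_proj :: "stat \<Rightarrow> nat \<Rightarrow> nat \<Rightarrow> state set \<Rightarrow> state \<Rightarrow> state \<Rightarrow> bool" where
  "is_orth_proj st L k K \<psi> \<phi> \<longleftrightarrow> \<phi> \<in> K \<and> (\<forall>\<eta>\<in>K. inner_n st L k \<eta> (\<lambda>c. \<psi> c - \<phi> c) = 0)"

lemma state_subspace_zero: "state_subspace K \<Longrightarrow> (\<lambda>c. 0) \<in> K"
  unfolding state_subspace_def by blast

lemma state_subspace_add: "state_subspace K \<Longrightarrow> x \<in> K \<Longrightarrow> y \<in> K \<Longrightarrow> (\<lambda>c. x c + y c) \<in> K"
  unfolding state_subspace_def by blast

lemma state_subspace_scale: "state_subspace K \<Longrightarrow> x \<in> K \<Longrightarrow> (\<lambda>c. a * x c) \<in> K"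
  unfolding state_subspace_def by blast

lemma state_subspace_diff:
  assumes "state_subspace K" "x \<in> K" "y \<in> K"
  shows "(\<lambda>c. x c - y c) \<in> K"
  using state_subspace_add[OF assms(1,2) state_subspace_scale[OF assms(1,3), of "-1"]] by simp

lemma state_subspace_vanishing_at:
  "state_subspace K \<Longrightarrow> state_subspace {x\<in>K. x t = 0}"
  unfolding state_subspace_def by auto

text \<open>Projections are constructed by induction on the support of the subspace K: the projection
  onto K is the projection onto its hyperplane {x \<in> K. x t = 0} plus the component along a
  vector w \<in> K orthogonal to that hyperplane.\<close>

lemma is_orth_proj_extend:
  assumes K: "state_subspace K"
    and w: "w \<in> K" "w t \<noteq> 0" "inner_n st L k w w \<noteq> 0"
    and w_orth: "\<forall>\<eta>\<in>{x\<in>K. x t = 0}. inner_n st L k \<eta> w = 0"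
    and \<phi>: "is_orth_proj st L k {x\<in>K. x t = 0} \<psi> \<phi>"
  defines "a \<equiv> inner_n st L k w \<psi> / inner_n st L k w w"
  shows "is_orth_proj st L k K \<psi> (\<lambda>c. \<phi> c + a * w c)"
  unfolding is_orth_proj_def
proof (intro conjI ballI)
  have \<phi>K': "\<phi> \<in> {x\<in>K. x t = 0}"
    and \<phi>_orth: "\<forall>\<eta>\<in>{x\<in>K. x t = 0}. inner_n st L k \<eta> (\<lambda>c. \<psi> c - \<phi> c) = 0"
    using \<phi> unfolding is_orth_proj_def by auto
  then have \<phi>K: "\<phi> \<in> K" by simp
  then show "(\<lambda>c. \<phi> c + a * w c) \<in> K" by (intro state_subspace_add[OF K] state_subspace_scale[OF K w(1)])
  fix \<eta> assume \<eta>: "\<eta> \<in> K"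
  define \<beta> where "\<beta> = \<eta> t / w t"
  define \<eta>' where "\<eta>' = (\<lambda>c. \<eta> c - \<beta> * w c)"
  have "\<eta>' \<in> K" unfolding \<eta>'_def by (intro state_subspace_diff[OF K \<eta>] state_subspace_scale[OF K w(1)])
  then have "\<eta>' \<in> {x\<in>K. x t = 0}" using w(2) unfolding \<eta>'_def \<beta>_def by simp
  then have i1: "inner_n st L k \<eta>' (\<lambda>c. \<psi> c - \<phi> c) = 0" and i2: "inner_n st L k \<eta>' w = 0"
    using \<phi>_orth w_orth by blast+
  have "inner_n st L k \<phi> w = 0" using w_orth \<phi>K' by blast
  then have i3: "inner_n st L k w \<phi> = 0" by (simp add: inner_n_commute[of st L k w \<phi>])
  have "\<eta> = (\<lambda>c. \<eta>' c + \<beta> * w c)" and "(\<lambda>c. \<psi> c - (\<phi> c + a * w c)) = (\<lambda>c. (\<psi> c - \<phi> c) - a * w c)"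
    unfolding \<eta>'_def by (simp_all add: algebra_simps)
  then have "inner_n st L k \<eta> (\<lambda>c. \<psi> c - (\<phi> c + a * w c)) =
      inner_n st L k \<eta>' (\<lambda>c. \<psi> c - \<phi> c) - a * inner_n st L k \<eta>' w
      + cnj \<beta> * (inner_n st L k w \<psi> - inner_n st L k w \<phi> - a * inner_n st L k w w)"
    by (simp only: inner_n_add_left inner_n_scale_left inner_n_diff_right inner_n_scale_right)
  then show "inner_n st L k \<eta> (\<lambda>c. \<psi> c - (\<phi> c + a * w c)) = 0"
    using i1 i2 i3 w(3) unfolding a_def by simp
qed

lemma is_orth_proj_exists:
  assumes "finite T" "T \<subseteq> cfgs st L k" "state_subspace K" "\<forall>x\<in>K. \<forall>c. x c \<noteq> 0 \<longrightarrow> c \<in> T"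
  shows "\<exists>\<phi>. is_orth_proj st L k K \<psi> \<phi>"
  using assms
proof (induction T arbitrary: K \<psi> rule: finite_induct)
  case empty
  have zero: "x = (\<lambda>c. 0)" if "x \<in> K" for x using empty.prems(3) that by (auto simp: fun_eq_iff)
  have "is_orth_proj st L k K \<psi> (\<lambda>c. 0)"
    unfolding is_orth_proj_def
  proof (intro conjI ballI)
    show "(\<lambda>c. 0) \<in> K" by (rule state_subspace_zero[OF empty.prems(2)])
    fix \<eta> assume "\<eta> \<in> K"
    then have "\<eta> = (\<lambda>c. 0)" by (rule zero)
    then show "inner_n st L k \<eta> (\<lambda>c. \<psi> c - 0) = 0" by (simp add: inner_n_zero_left)
  qed
  then show ?case by blast
next
  case (insert t T)
  let ?K' = "{x\<in>K. x t = 0}"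
  have IH: "\<exists>\<phi>. is_orth_proj st L k ?K' z \<phi>" for z
    by (rule insert.IH) (use insert.prems in \<open>auto simp: state_subspace_vanishing_at\<close>)
  show ?case
  proof (cases "\<forall>x\<in>K. x t = 0")
    case True
    then have "?K' = K" by auto
    then show ?thesis using IH by simp
  next
    case False
    then obtain x0 where x0: "x0 \<in> K" "x0 t \<noteq> 0" by auto
    obtain \<phi>0 where \<phi>0: "is_orth_proj st L k ?K' x0 \<phi>0" using IH by blast
    obtain \<phi>1 where \<phi>1: "is_orth_proj st L k ?K' \<psi> \<phi>1" using IH by blast
    define w where "w = (\<lambda>c. x0 c - \<phi>0 c)"
    have wK: "w \<in> K" and wt: "w t \<noteq> 0"
      using \<phi>0 x0 state_subspace_diff[OF insert.prems(2)] unfolding w_def is_orth_proj_def by auto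
    have "t \<in> cfgs st L k" using insert.prems(1) by simp
    then have "0 < norm_n st L k w"
      using cmod_le_norm_n[of t st L k w] wt by (meson order_less_le_trans zero_less_norm_iff)
    then have "inner_n st L k w w \<noteq> 0" by (simp add: inner_n_self)
    moreover have "\<forall>\<eta>\<in>?K'. inner_n st L k \<eta> w = 0"
      using \<phi>0 unfolding w_def is_orth_proj_def by blast
    ultimately show ?thesis
      using is_orth_proj_extend[OF insert.prems(2) wK wt _ _ \<phi>1] by blast
  qed
qed

lemma is_orth_proj_unique:
  assumes K: "state_subspace K" "\<forall>x\<in>K. insec st L k x"
    and "is_orth_proj st L k K \<psi> \<phi>1" "is_orth_proj st L k K \<psi> \<phi>2"
  shows "\<phi>1 = \<phi>2"
proof -
  define d where "d = (\<lambda>c. \<phi>1 c - \<phi>2 c)"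
  have dK: "d \<in> K" using assms state_subspace_diff[OF K(1)] unfolding d_def is_orth_proj_def by blast
  have "inner_n st L k d (\<lambda>c. \<psi> c - \<phi>2 c) = 0" "inner_n st L k d (\<lambda>c. \<psi> c - \<phi>1 c) = 0"
    using assms(3,4) dK unfolding is_orth_proj_def by blast+
  moreover have "inner_n st L k d d
      = inner_n st L k d (\<lambda>c. \<psi> c - \<phi>2 c) - inner_n st L k d (\<lambda>c. \<psi> c - \<phi>1 c)"
    unfolding inner_n_diff_right[symmetric] d_def by (simp add: algebra_simps)
  ultimately have "inner_n st L k d d = 0" by simp
  then have "norm_n st L k d = 0" by (simp add: inner_n_self)
  then have "d = (\<lambda>c. 0)" using insec_norm_n_eq_0 K(2) dK by blast
  then show ?thesis unfolding d_def by (simp add: fun_eq_iff)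
qed

section \<open>The kernel projection and the spectral gap\<close>

lemma kerH_insec: "x \<in> kerH st L W m0 m1 k \<Longrightarrow> insec st L k x"
  unfolding kerH_def by simp

lemma state_subspace_kerH: "state_subspace (kerH st L W m0 m1 k)"
  unfolding state_subspace_def kerH_def
  by (simp add: linear_op_zero linear_opD linear_op_Ham insec_zero insec_add insec_scale)

lemma Pn_is_orth_proj: "is_orth_proj st L k (kerH st L W m0 m1 k) \<psi> (Pn st L W m0 m1 k \<psi>)"
proof -
  let ?K = "kerH st L W m0 m1 k"
  have "\<forall>x\<in>?K. \<forall>c. x c \<noteq> 0 \<longrightarrow> c \<in> cfgs st L k" using kerH_insec unfolding insec_def by blast
  then obtain \<phi> where \<phi>: "is_orth_proj st L k ?K \<psi> \<phi>"
    using is_orth_proj_exists[OF finite_cfgs order_refl state_subspace_kerH] by blast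
  then have "\<exists>!\<phi>. is_orth_proj st L k ?K \<psi> \<phi>"
    using is_orth_proj_unique[OF state_subspace_kerH _ _ \<phi>] kerH_insec by blast
  moreover have "Pn st L W m0 m1 k \<psi> = (THE \<phi>. is_orth_proj st L k ?K \<psi> \<phi>)"
    unfolding Pn_def is_orth_proj_def ..
  ultimately show ?thesis by (simp add: theI')
qed

lemma Pn_kerH: "Pn st L W m0 m1 k \<psi> \<in> kerH st L W m0 m1 k"
  using Pn_is_orth_proj unfolding is_orth_proj_def by blast

lemma Pn_orth:
  "\<eta> \<in> kerH st L W m0 m1 k \<Longrightarrow> inner_n st L k \<eta> (\<lambda>c. \<psi> c - Pn st L W m0 m1 k \<psi> c) = 0"
  using Pn_is_orth_proj unfolding is_orth_proj_def by blast

lemma Pn_eqI: "is_orth_proj st L k (kerH st L W m0 m1 k) \<psi> \<phi> \<Longrightarrow> Pn st L W m0 m1 k \<psi> = \<phi>"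
  using is_orth_proj_unique[OF state_subspace_kerH _ Pn_is_orth_proj] kerH_insec by blast

lemma linear_op_Pn: "linear_op (Pn st L W m0 m1 k)"
  unfolding linear_op_def
proof (intro conjI allI)
  fix x y :: state and a
  let ?K = "kerH st L W m0 m1 k" and ?P = "Pn st L W m0 m1 k"
  have K: "state_subspace ?K" by (rule state_subspace_kerH)
  show "?P (\<lambda>c. x c + y c) = (\<lambda>c. ?P x c + ?P y c)"
  proof (rule Pn_eqI)
    have "(\<lambda>c. x c + y c - (?P x c + ?P y c)) = (\<lambda>c. (x c - ?P x c) + (y c - ?P y c))"
      by (simp add: algebra_simps)
    then show "is_orth_proj st L k ?K (\<lambda>c. x c + y c) (\<lambda>c. ?P x c + ?P y c)"
      unfolding is_orth_proj_def using state_subspace_add[OF K Pn_kerH Pn_kerH]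
      by (simp add: Pn_orth inner_n_add_right)
  qed
  show "?P (\<lambda>c. a * x c) = (\<lambda>c. a * ?P x c)"
  proof (rule Pn_eqI)
    have "(\<lambda>c. a * x c - a * ?P x c) = (\<lambda>c. a * (x c - ?P x c))"
      by (simp add: algebra_simps)
    then show "is_orth_proj st L k ?K (\<lambda>c. a * x c) (\<lambda>c. a * ?P x c)"
      unfolding is_orth_proj_def using state_subspace_scale[OF K Pn_kerH]
      by (simp add: Pn_orth inner_n_scale_right)
  qed
qed

lemma linear_op_Pn_perp: "linear_op (Pn_perp st L W m0 m1 k)"
  using linear_op_Pn[of st L W m0 m1 k] unfolding linear_op_def Pn_perp_def[abs_def]
  by (simp add: algebra_simps)

lemma Pn_perp_eq_self:
  "\<forall>\<eta>\<in>kerH st L W m0 m1 k. inner_n st L k \<eta> \<psi> = 0 \<Longrightarrow> Pn_perp st L W m0 m1 k \<psi> = \<psi>"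
  using Pn_eqI[of st L k W m0 m1 \<psi> "\<lambda>c. 0"] state_subspace_kerH
  unfolding Pn_perp_def is_orth_proj_def state_subspace_def by simp

lemma inner_n_Pn_perp_right:
  assumes "\<forall>\<eta>\<in>kerH st L W m0 m1 k. inner_n st L k \<eta> \<psi> = 0"
  shows "inner_n st L k \<psi> (Pn_perp st L W m0 m1 k y) = inner_n st L k \<psi> y"
proof -
  have "inner_n st L k (Pn st L W m0 m1 k y) \<psi> = 0" using assms Pn_kerH by blast
  then have "inner_n st L k \<psi> (Pn st L W m0 m1 k y) = 0"
    by (simp add: inner_n_commute[of st L k \<psi>])
  then show ?thesis unfolding Pn_perp_def by (simp add: inner_n_diff_right)
qed

lemma norm_n_Pn_perp_sq:
  "(norm_n st L k (Pn_perp st L W m0 m1 k x))\<^sup>2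
     = (norm_n st L k x)\<^sup>2 - Re (inner_n st L k x (Pn st L W m0 m1 k x))"
  unfolding Pn_perp_def by (rule norm_n_diff_sq_orth[OF Pn_orth[OF Pn_kerH]])

lemma Ham_selfadjoint:
  assumes selfadj: "\<forall>m\<in>{m0..m1}. \<forall>k \<phi> \<psi>. insec st L k \<phi> \<longrightarrow> insec st L k \<psi> \<longrightarrow>
                   inner_n st L k \<phi> (Hm st L W m \<psi>) = inner_n st L k (Hm st L W m \<phi>) \<psi>"
    and "insec st L k \<phi>" "insec st L k \<psi>"
  shows "inner_n st L k \<phi> (Ham st L W m0 m1 \<psi>) = inner_n st L k (Ham st L W m0 m1 \<phi>) \<psi>"
  unfolding Ham_def inner_n_sum_right inner_n_sum_left using assms by simp

lemma inner_n_Ham_Pn_perp: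
  assumes selfadj: "\<forall>m\<in>{m0..m1}. \<forall>k \<phi> \<psi>. insec st L k \<phi> \<longrightarrow> insec st L k \<psi> \<longrightarrow>
                   inner_n st L k \<phi> (Hm st L W m \<psi>) = inner_n st L k (Hm st L W m \<phi>) \<psi>"
    and x: "insec st L k x"
  shows "inner_n st L k x (Ham st L W m0 m1 x)
       = inner_n st L k (Pn_perp st L W m0 m1 k x) (Ham st L W m0 m1 (Pn_perp st L W m0 m1 k x))"
proof -
  let ?H = "Ham st L W m0 m1" and ?p = "Pn st L W m0 m1 k x" and ?r = "Pn_perp st L W m0 m1 k x"
  have pK: "?p \<in> kerH st L W m0 m1 k" by (rule Pn_kerH)
  then have p: "insec st L k ?p" by (rule kerH_insec)
  have r: "insec st L k ?r" unfolding Pn_perp_def by (rule insec_diff[OF x p])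
  have x_eq: "(\<lambda>c. ?p c + ?r c) = x" unfolding Pn_perp_def by simp
  have Hp: "inner_n st L k y (?H ?p) = 0" for y using pK unfolding inner_n_def kerH_def by simp
  have "inner_n st L k ?p (?H ?r) = cnj (inner_n st L k ?r (?H ?p))"
    unfolding Ham_selfadjoint[OF selfadj p r] by (rule inner_n_commute)
  then have pr: "inner_n st L k ?p (?H ?r) = 0" by (simp add: Hp)
  have "?H (\<lambda>c. ?p c + ?r c) = (\<lambda>c. ?H ?p c + ?H ?r c)" by (rule linear_opD(1)[OF linear_op_Ham])
  then have "inner_n st L k x (?H x) = inner_n st L k x (?H ?r)"
    unfolding x_eq by (simp add: inner_n_add_right Hp)
  also have "\<dots> = inner_n st L k (\<lambda>c. ?p c + ?r c) (?H ?r)" by (simp only: x_eq)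
  also have "\<dots> = inner_n st L k ?r (?H ?r)" by (simp add: inner_n_add_left pr)
  finally show ?thesis .
qed

definition gap_values :: "stat \<Rightarrow> nat \<Rightarrow> (nat \<Rightarrow> nat list \<Rightarrow> nat list \<Rightarrow> complex) \<Rightarrow> nat \<Rightarrow> nat \<Rightarrow> nat \<Rightarrow> real set" where
  "gap_values st L W m0 m1 k = {Re (inner_n st L k \<psi> (Ham st L W m0 m1 \<psi>)) | \<psi>.
      insec st L k \<psi> \<and> (\<forall>\<eta>\<in>kerH st L W m0 m1 k. inner_n st L k \<eta> \<psi> = 0) \<and> norm_n st L k \<psi> = 1}"

lemma gapH_eq_Inf: "gapH st L W m0 m1 k = Inf (gap_values st L W m0 m1 k)"
  unfolding gapH_def gap_values_def ..

lemma normalized_in_gap_values: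
  assumes "insec st L k r" "\<forall>\<eta>\<in>kerH st L W m0 m1 k. inner_n st L k \<eta> r = 0" "norm_n st L k r \<noteq> 0"
  defines "u \<equiv> (\<lambda>c. complex_of_real (1 / norm_n st L k r) * r c)"
  shows "Re (inner_n st L k u (Ham st L W m0 m1 u)) \<in> gap_values st L W m0 m1 k"
proof -
  have "norm_n st L k u = 1"
    unfolding u_def norm_n_scale norm_of_real using assms(3) norm_n_nonneg[of st L k r] by simp
  moreover have "\<forall>\<eta>\<in>kerH st L W m0 m1 k. inner_n st L k \<eta> u = 0"
    using assms(2) unfolding u_def inner_n_scale_right by simp
  ultimately show ?thesis unfolding gap_values_def u_def using insec_scale[OF assms(1)] by blast
qed

lemma gap_values_nonempty:
  assumes "insec st L k \<psi>" "\<psi> \<notin> kerH st L W m0 m1 k"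
  shows "gap_values st L W m0 m1 k \<noteq> {}"
proof -
  let ?r = "Pn_perp st L W m0 m1 k \<psi>"
  have r: "insec st L k ?r" unfolding Pn_perp_def by (rule insec_diff[OF assms(1) kerH_insec[OF Pn_kerH]])
  have "norm_n st L k ?r \<noteq> 0"
  proof
    assume "norm_n st L k ?r = 0"
    then have "\<psi> = Pn st L W m0 m1 k \<psi>"
      using insec_norm_n_eq_0[OF r] unfolding Pn_perp_def by (simp add: fun_eq_iff)
    then show False using assms(2) Pn_kerH by metis
  qed
  moreover have "\<forall>\<eta>\<in>kerH st L W m0 m1 k. inner_n st L k \<eta> ?r = 0"
    using Pn_orth unfolding Pn_perp_def by blast
  ultimately show ?thesis using normalized_in_gap_values[OF r] by blast
qed

lemma gap_values_nonneg:
  assumes "\<forall>\<psi>. insec st L k \<psi> \<longrightarrow> 0 \<le> Re (inner_n st L k \<psi> (Ham st L W m0 m1 \<psi>))"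
  shows "s \<in> gap_values st L W m0 m1 k \<Longrightarrow> 0 \<le> s"
  using assms unfolding gap_values_def by auto

lemma gapH_nonneg:
  assumes "\<forall>\<psi>. insec st L k \<psi> \<longrightarrow> 0 \<le> Re (inner_n st L k \<psi> (Ham st L W m0 m1 \<psi>))"
    and "insec st L k \<psi>" "\<psi> \<notin> kerH st L W m0 m1 k"
  shows "0 \<le> gapH st L W m0 m1 k"
  unfolding gapH_eq_Inf
  by (rule cInf_greatest[OF gap_values_nonempty[OF assms(2,3)] gap_values_nonneg[OF assms(1)]])

lemma le_gapH:
  assumes "insec st L k \<psi>0" "\<psi>0 \<notin> kerH st L W m0 m1 k"
    and "\<And>\<psi>. insec st L k \<psi> \<Longrightarrow> \<forall>\<eta>\<in>kerH st L W m0 m1 k. inner_n st L k \<eta> \<psi> = 0 \<Longrightarrow>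
           norm_n st L k \<psi> = 1 \<Longrightarrow> R \<le> Re (inner_n st L k \<psi> (Ham st L W m0 m1 \<psi>))"
  shows "R \<le> gapH st L W m0 m1 k"
  unfolding gapH_eq_Inf
  by (rule cInf_greatest[OF gap_values_nonempty[OF assms(1,2)]]) (auto simp: gap_values_def assms(3))

lemma gapH_mul_norm_sq_le_orth:
  assumes pos: "\<forall>\<psi>. insec st L k \<psi> \<longrightarrow> 0 \<le> Re (inner_n st L k \<psi> (Ham st L W m0 m1 \<psi>))"
    and r: "insec st L k r" "\<forall>\<eta>\<in>kerH st L W m0 m1 k. inner_n st L k \<eta> r = 0"
  shows "gapH st L W m0 m1 k * (norm_n st L k r)\<^sup>2 \<le> Re (inner_n st L k r (Ham st L W m0 m1 r))"
proof (cases "norm_n st L k r = 0")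
  case True
  have "inner_n st L k r (Ham st L W m0 m1 r) = 0"
    unfolding insec_norm_n_eq_0[OF r(1) True] by (rule inner_n_zero_left)
  with True show ?thesis by simp
next
  case False
  let ?H = "Ham st L W m0 m1"
  define a where "a = 1 / norm_n st L k r"
  define u where "u = (\<lambda>c. complex_of_real a * r c)"
  have "Re (inner_n st L k u (?H u)) \<in> gap_values st L W m0 m1 k"
    unfolding u_def a_def by (rule normalized_in_gap_values[OF r False])
  moreover have "bdd_below (gap_values st L W m0 m1 k)"
    by (rule bdd_belowI[of _ 0]) (rule gap_values_nonneg[OF pos])
  ultimately have "gapH st L W m0 m1 k \<le> Re (inner_n st L k u (?H u))"
    unfolding gapH_eq_Inf by (rule cInf_lower)
  also have "\<dots> = a * a * Re (inner_n st L k r (?H r))"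
    unfolding u_def linear_opD(2)[OF linear_op_Ham] inner_n_scale_left inner_n_scale_right by simp
  finally have "gapH st L W m0 m1 k * (norm_n st L k r)\<^sup>2 \<le> a * a * Re (inner_n st L k r (?H r)) * (norm_n st L k r)\<^sup>2"
    by (simp add: mult_right_mono)
  also have "\<dots> = Re (inner_n st L k r (?H r))"
    unfolding a_def using False by (simp add: power2_eq_square)
  finally show ?thesis .
qed

lemma gapH_mul_norm_Pn_perp_sq_le:
  assumes selfadj: "\<forall>m\<in>{m0..m1}. \<forall>k \<phi> \<psi>. insec st L k \<phi> \<longrightarrow> insec st L k \<psi> \<longrightarrow>
                   inner_n st L k \<phi> (Hm st L W m \<psi>) = inner_n st L k (Hm st L W m \<phi>) \<psi>"
    and pos: "\<forall>\<psi>. insec st L k \<psi> \<longrightarrow> 0 \<le> Re (inner_n st L k \<psi> (Ham st L W m0 m1 \<psi>))"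
    and x: "insec st L k x"
  shows "gapH st L W m0 m1 k * (norm_n st L k (Pn_perp st L W m0 m1 k x))\<^sup>2
       \<le> Re (inner_n st L k x (Ham st L W m0 m1 x))"
proof -
  have "insec st L k (Pn_perp st L W m0 m1 k x)"
    unfolding Pn_perp_def by (rule insec_diff[OF x kerH_insec[OF Pn_kerH]])
  moreover have "\<forall>\<eta>\<in>kerH st L W m0 m1 k. inner_n st L k \<eta> (Pn_perp st L W m0 m1 k x) = 0"
    using Pn_orth unfolding Pn_perp_def by blast
  ultimately show ?thesis
    unfolding inner_n_Ham_Pn_perp[OF selfadj x] by (rule gapH_mul_norm_sq_le_orth[OF pos])
qed

section \<open>The gap inequality\<close>

definition sum_adag_Pn_ann :: "stat \<Rightarrow> nat \<Rightarrow> (nat \<Rightarrow> nat list \<Rightarrow> nat list \<Rightarrow> complex) \<Rightarrow> nat \<Rightarrow> nat \<Rightarrow> nat \<Rightarrow> state \<Rightarrow> state" where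
  "sum_adag_Pn_ann st L W m0 m1 k \<psi> = (\<lambda>c. \<Sum>j\<in>{1..L}. adag st L j (Pn st L W m0 m1 k (ann st L j \<psi>)) c)"

lemma linear_op_sum_adag_Pn_ann: "linear_op (sum_adag_Pn_ann st L W m0 m1 k)"
proof -
  have "linear_op (adag st L j \<circ> Pn st L W m0 m1 k \<circ> ann st L j)" for j
    by (intro linear_op_comp linear_op_adag linear_op_Pn linear_op_ann)
  then show ?thesis unfolding sum_adag_Pn_ann_def[abs_def]
    using linear_op_sum[of "{1..L}" "\<lambda>j. adag st L j \<circ> Pn st L W m0 m1 k \<circ> ann st L j"] by simp
qed

lemma sum_norm_Pn_perp_ann_sq:
  assumes "insec st L (Suc k) \<psi>"
  shows "(\<Sum>j\<in>{1..L}. (norm_n st L k (Pn_perp st L W m0 m1 k (ann st L j \<psi>)))\<^sup>2)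
       = real (Suc k) * (norm_n st L (Suc k) \<psi>)\<^sup>2
         - Re (inner_n st L (Suc k) \<psi> (sum_adag_Pn_ann st L W m0 m1 k \<psi>))"
proof -
  have "(\<Sum>j\<in>{1..L}. (norm_n st L k (ann st L j \<psi>))\<^sup>2) = real (Suc k) * (norm_n st L (Suc k) \<psi>)\<^sup>2"
    using arg_cong[OF sum_inner_n_ann_self[OF assms], of Re] by (simp add: inner_n_self)
  moreover have "(\<Sum>j\<in>{1..L}. Re (inner_n st L k (ann st L j \<psi>) (Pn st L W m0 m1 k (ann st L j \<psi>))))
      = Re (inner_n st L (Suc k) \<psi> (sum_adag_Pn_ann st L W m0 m1 k \<psi>))"
    unfolding sum_adag_Pn_ann_def inner_n_sum_right inner_n_adag by simp
  ultimately show ?thesis unfolding norm_n_Pn_perp_sq sum_subtractf by simp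
qed

lemma gap_value_lower_bound:
  fixes D :: real
  assumes selfadj: "\<forall>m\<in>{m0..m1}. \<forall>k \<phi> \<psi>. insec st L k \<phi> \<longrightarrow> insec st L k \<psi> \<longrightarrow>
                   inner_n st L k \<phi> (Hm st L W m \<psi>) = inner_n st L k (Hm st L W m \<phi>) \<psi>"
    and pos: "\<forall>\<psi>. insec st L n \<psi> \<longrightarrow> 0 \<le> Re (inner_n st L n \<psi> (Ham st L W m0 m1 \<psi>))"
    and "0 \<le> gapH st L W m0 m1 n" "0 < D"
    and hyp: "1 / D * Re (inner_n st L (Suc n) \<psi>
                (\<lambda>c. \<Sum>j\<in>{1..L}. adag st L j (Ham st L W m0 m1 (ann st L j \<psi>)) c))
              \<le> Re (inner_n st L (Suc n) \<psi> (Ham st L W m0 m1 \<psi>))"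
    and \<psi>: "insec st L (Suc n) \<psi>" "\<forall>\<eta>\<in>kerH st L W m0 m1 (Suc n). inner_n st L (Suc n) \<eta> \<psi> = 0"
      "norm_n st L (Suc n) \<psi> = 1"
  shows "(real (Suc n) - opnorm_n st L (Suc n)
            (\<lambda>\<psi>. Pn_perp st L W m0 m1 (Suc n) (sum_adag_Pn_ann st L W m0 m1 n (Pn_perp st L W m0 m1 (Suc n) \<psi>))))
          / D * gapH st L W m0 m1 n
       \<le> Re (inner_n st L (Suc n) \<psi> (Ham st L W m0 m1 \<psi>))"
proof -
  let ?H = "Ham st L W m0 m1" and ?g = "gapH st L W m0 m1 n"
  let ?X = "\<lambda>\<psi>. Pn_perp st L W m0 m1 (Suc n) (sum_adag_Pn_ann st L W m0 m1 n (Pn_perp st L W m0 m1 (Suc n) \<psi>))"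
  let ?Y = "sum_adag_Pn_ann st L W m0 m1 n \<psi>"
  have "linear_op ?X"
    using linear_op_comp[OF linear_op_Pn_perp linear_op_comp[OF linear_op_sum_adag_Pn_ann linear_op_Pn_perp]]
    by (simp add: comp_def)
  then have "Re (inner_n st L (Suc n) \<psi> (?X \<psi>)) \<le> opnorm_n st L (Suc n) ?X"
    using \<psi>(1,3) by (rule re_inner_n_le_opnorm_n)
  moreover have "inner_n st L (Suc n) \<psi> (?X \<psi>) = inner_n st L (Suc n) \<psi> ?Y"
    using \<psi>(2) by (simp add: Pn_perp_eq_self inner_n_Pn_perp_right)
  ultimately have Y_le: "Re (inner_n st L (Suc n) \<psi> ?Y) \<le> opnorm_n st L (Suc n) ?X"
    by simp
  have "(real (Suc n) - opnorm_n st L (Suc n) ?X) / D * ?g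
      \<le> ?g * (real (Suc n) - Re (inner_n st L (Suc n) \<psi> ?Y)) / D"
    using Y_le assms(3,4) by (simp add: divide_right_mono mult_left_mono mult.commute)
  also have "\<dots> = (\<Sum>j\<in>{1..L}. ?g * (norm_n st L n (Pn_perp st L W m0 m1 n (ann st L j \<psi>)))\<^sup>2) / D"
    unfolding sum_distrib_left[symmetric] sum_norm_Pn_perp_ann_sq[OF \<psi>(1)] \<psi>(3) by simp
  also have "\<dots> \<le> (\<Sum>j\<in>{1..L}. Re (inner_n st L n (ann st L j \<psi>) (?H (ann st L j \<psi>)))) / D"
    using assms(4) insec_ann[OF \<psi>(1)]
    by (intro divide_right_mono sum_mono gapH_mul_norm_Pn_perp_sq_le[OF selfadj pos]) auto
  also have "\<dots> = 1 / D * Re (inner_n st L (Suc n) \<psi> (\<lambda>c. \<Sum>j\<in>{1..L}. adag st L j (?H (ann st L j \<psi>)) c))"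
    unfolding inner_n_sum_right inner_n_adag by simp
  finally show ?thesis using hyp by linarith
qed

theorem lemma1:
  fixes st :: stat and L m0 m1 n :: nat
    and W :: "nat \<Rightarrow> nat list \<Rightarrow> nat list \<Rightarrow> complex"
  assumes "m0 \<le> m1"
    and selfadj: "\<forall>m\<in>{m0..m1}. \<forall>k \<phi> \<psi>. insec st L k \<phi> \<longrightarrow> insec st L k \<psi> \<longrightarrow>
                   inner_n st L k \<phi> (Hm st L W m \<psi>) = inner_n st L k (Hm st L W m \<phi>) \<psi>"
    and "m1 \<le> n"
    and pos: "\<forall>\<psi>. insec st L n \<psi> \<longrightarrow> 0 \<le> Re (inner_n st L n \<psi> (Ham st L W m0 m1 \<psi>))"
    and hyp: "\<forall>\<psi>. insec st L (n+1) \<psi> \<longrightarrow>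
              Re (inner_n st L (n+1) \<psi> (Ham st L W m0 m1 \<psi>)) \<ge>
              1 / real (n + 1 - m0) * Re (inner_n st L (n+1) \<psi>
                 (\<lambda>c. \<Sum>j\<in>{1..L}. adag st L j (Ham st L W m0 m1 (ann st L j \<psi>)) c))"
    and nondeg_n: "\<exists>\<psi>. insec st L n \<psi> \<and> \<psi> \<notin> kerH st L W m0 m1 n"
    and nondeg_n1: "\<exists>\<psi>. insec st L (n+1) \<psi> \<and> \<psi> \<notin> kerH st L W m0 m1 (n+1)"
  shows "gapH st L W m0 m1 (n+1) \<ge>
    (real (n+1) - opnorm_n st L (n+1)
        (\<lambda>\<psi>. Pn_perp st L W m0 m1 (n+1)
           (\<lambda>c. \<Sum>j\<in>{1..L}. adag st L j (Pn st L W m0 m1 n (ann st L j (Pn_perp st L W m0 m1 (n+1) \<psi>))) c)))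
    / real (n + 1 - m0) * gapH st L W m0 m1 n"
proof -
  have D: "0 < real (n + 1 - m0)" using assms(1,3) by simp
  have g: "0 \<le> gapH st L W m0 m1 n" using nondeg_n gapH_nonneg[OF pos] by blast
  obtain \<psi>0 where "insec st L (Suc n) \<psi>0" "\<psi>0 \<notin> kerH st L W m0 m1 (Suc n)" using nondeg_n1 by auto
  then have "(real (Suc n) - opnorm_n st L (Suc n)
            (\<lambda>\<psi>. Pn_perp st L W m0 m1 (Suc n) (sum_adag_Pn_ann st L W m0 m1 n (Pn_perp st L W m0 m1 (Suc n) \<psi>))))
          / real (n + 1 - m0) * gapH st L W m0 m1 n \<le> gapH st L W m0 m1 (Suc n)"
    using hyp by (intro le_gapH gap_value_lower_bound[OF selfadj pos g D]) auto
  then show ?thesis unfolding sum_adag_Pn_ann_def by simp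
qed

end
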